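(* The truncated Fourier–Plancherel operator $\mathscr{F}_{\mathbb{R}^{+}}$ on $L^2(\mathbb{R}^{+})$ is not similar to any normal operator, i.e. there is no bounded invertible operator $S$ and normal operator $\mathcal{N}$ (on a Hilbert space) with $\mathscr{F}_{\mathbb{R}^{+}}=S^{-1}\mathcal{N}S$.
   Context: $\mathbb{R}^{+}=(0,\infty)$. The truncated Fourier–Plancherel operator is $\mathscr{F}_{\mathbb{R}^{+}}=P_{\mathbb{R}^{+}}\mathscr{F}|_{L^2(\mathbb{R}^{+})}$, where $\mathscr{F}$ is the unitary Fourier–Plancherel operator on $L^2(\mathbb{R})$, $(\mathscr{F}x)(t)=\frac{1}{\sqrt{2\pi}}\int_{\mathbb{R}}x(\xi)e^{it\xi}d\xi$, and $P_{\mathbb{R}^{+}}$ is multiplication by the indicator of $\mathbb{R}^{+}$; for integrable $x$, $(\mathscr{F}_{\mathbb{R}^{+}}x)(t)=\frac{1}{\sqrt{2\pi}}\int_{\mathbb{R}^{+}}x(\xi)e^{it\xi}d\xi$, $t>0$. *)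

theory Defs
  imports "HOL-Analysis.Analysis"
begin

text \<open>Elements of L^2(0,oo) are represented by Borel functions real => complex that are
square integrable over {0<..}; two representatives are identified when they agree almost
everywhere on {0<..}. Values on (-oo,0] are irrelevant.\<close>

definition L2p :: "(real \<Rightarrow> complex) set" where
  "L2p = {f. f \<in> borel_measurable lborel \<and>
              set_integrable lborel {0<..} (\<lambda>x. (cmod (f x))\<^sup>2)}"

definition aeq :: "(real \<Rightarrow> complex) \<Rightarrow> (real \<Rightarrow> complex) \<Rightarrow> bool" where
  "aeq f g \<longleftrightarrow> (AE x in lborel. 0 < x \<longrightarrow> f x = g x)"

definition L2norm :: "(real \<Rightarrow> complex) \<Rightarrow> real" where
  "L2norm f = sqrt (LINT x:{0<..}|lborel. (cmod (f x))\<^sup>2)"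

definition bdd_op_L2 :: "((real \<Rightarrow> complex) \<Rightarrow> (real \<Rightarrow> complex)) \<Rightarrow> bool" where
  "bdd_op_L2 T \<longleftrightarrow>
     (\<forall>f\<in>L2p. T f \<in> L2p) \<and>
     (\<forall>f\<in>L2p. \<forall>g\<in>L2p. aeq f g \<longrightarrow> aeq (T f) (T g)) \<and>
     (\<forall>f\<in>L2p. \<forall>g\<in>L2p. aeq (T (\<lambda>x. f x + g x)) (\<lambda>x. T f x + T g x)) \<and>
     (\<forall>c. \<forall>f\<in>L2p. aeq (T (\<lambda>x. c * f x)) (\<lambda>x. c * T f x)) \<and>
     (\<exists>C. \<forall>f\<in>L2p. L2norm (T f) \<le> C * L2norm f)"

text \<open>The truncated Fourier--Plancherel operator: the bounded operator on L^2(R^+) given, for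
integrable x, by (F x)(t) = (2 pi)^(-1/2) * integral over R^+ of x(xi) e^(i t xi), t > 0.
(By density of L^1 \<inter> L^2 and boundedness this determines the operator on a.e.-classes.)\<close>

definition is_trunc_FP :: "((real \<Rightarrow> complex) \<Rightarrow> (real \<Rightarrow> complex)) \<Rightarrow> bool" where
  "is_trunc_FP T \<longleftrightarrow> bdd_op_L2 T \<and>
     (\<forall>f\<in>L2p. set_integrable lborel {0<..} f \<longrightarrow>
        (AE t in lborel. 0 < t \<longrightarrow>
           T f t = complex_of_real (1 / sqrt (2 * pi)) *
                   (LINT \<xi>:{0<..}|lborel. f \<xi> * exp (\<i> * complex_of_real t * complex_of_real \<xi>))))"

record 'h cH =
  hadd :: "'h \<Rightarrow> 'h \<Rightarrow> 'h"
  hzero :: 'h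
  hsmul :: "complex \<Rightarrow> 'h \<Rightarrow> 'h"
  hip :: "'h \<Rightarrow> 'h \<Rightarrow> complex"

definition hnorm :: "'h cH \<Rightarrow> 'h \<Rightarrow> real" where
  "hnorm H x = sqrt (Re (hip H x x))"

definition hdiff :: "'h cH \<Rightarrow> 'h \<Rightarrow> 'h \<Rightarrow> 'h" where
  "hdiff H x y = hadd H x (hsmul H (-1) y)"

definition complex_hilbert_space :: "'h cH \<Rightarrow> bool" where
  "complex_hilbert_space H \<longleftrightarrow>
     (\<forall>x y z. hadd H (hadd H x y) z = hadd H x (hadd H y z)) \<and>
     (\<forall>x y. hadd H x y = hadd H y x) \<and>
     (\<forall>x. hadd H (hzero H) x = x) \<and>
     (\<forall>x. \<exists>y. hadd H x y = hzero H) \<and>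
     (\<forall>x. hsmul H 1 x = x) \<and>
     (\<forall>a b x. hsmul H a (hsmul H b x) = hsmul H (a * b) x) \<and>
     (\<forall>a x y. hsmul H a (hadd H x y) = hadd H (hsmul H a x) (hsmul H a y)) \<and>
     (\<forall>a b x. hsmul H (a + b) x = hadd H (hsmul H a x) (hsmul H b x)) \<and>
     (\<forall>x y z. hip H (hadd H x y) z = hip H x z + hip H y z) \<and>
     (\<forall>a x y. hip H (hsmul H a x) y = a * hip H x y) \<and>
     (\<forall>x y. hip H y x = cnj (hip H x y)) \<and>
     (\<forall>x. Im (hip H x x) = 0 \<and> 0 \<le> Re (hip H x x)) \<and>
     (\<forall>x. hip H x x = 0 \<longrightarrow> x = hzero H) \<and>
     (\<forall>X :: nat \<Rightarrow> 'h.
        (\<forall>e>0. \<exists>M. \<forall>m\<ge>M. \<forall>n\<ge>M. hnorm H (hdiff H (X m) (X n)) < e) \<longrightarrow>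
        (\<exists>L. (\<lambda>n. hnorm H (hdiff H (X n) L)) \<longlonglongrightarrow> 0))"

definition bdd_op_H :: "'h cH \<Rightarrow> ('h \<Rightarrow> 'h) \<Rightarrow> bool" where
  "bdd_op_H H N \<longleftrightarrow>
     (\<forall>x y. N (hadd H x y) = hadd H (N x) (N y)) \<and>
     (\<forall>a x. N (hsmul H a x) = hsmul H a (N x)) \<and>
     (\<exists>C. \<forall>x. hnorm H (N x) \<le> C * hnorm H x)"

definition normal_op :: "'h cH \<Rightarrow> ('h \<Rightarrow> 'h) \<Rightarrow> bool" where
  "normal_op H N \<longleftrightarrow> bdd_op_H H N \<and>
     (\<exists>Nstar. bdd_op_H H Nstar \<and>
        (\<forall>x y. hip H (N x) y = hip H x (Nstar y)) \<and>
        (\<forall>x. N (Nstar x) = Nstar (N x)))"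

definition bdd_op_L2_H :: "'h cH \<Rightarrow> ((real \<Rightarrow> complex) \<Rightarrow> 'h) \<Rightarrow> bool" where
  "bdd_op_L2_H H S \<longleftrightarrow>
     (\<forall>f\<in>L2p. \<forall>g\<in>L2p. aeq f g \<longrightarrow> S f = S g) \<and>
     (\<forall>f\<in>L2p. \<forall>g\<in>L2p. S (\<lambda>x. f x + g x) = hadd H (S f) (S g)) \<and>
     (\<forall>c. \<forall>f\<in>L2p. S (\<lambda>x. c * f x) = hsmul H c (S f)) \<and>
     (\<exists>C. \<forall>f\<in>L2p. hnorm H (S f) \<le> C * L2norm f)"

definition bdd_op_H_L2 :: "'h cH \<Rightarrow> ('h \<Rightarrow> (real \<Rightarrow> complex)) \<Rightarrow> bool" where
  "bdd_op_H_L2 H R \<longleftrightarrow>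
     (\<forall>x. R x \<in> L2p) \<and>
     (\<forall>x y. aeq (R (hadd H x y)) (\<lambda>t. R x t + R y t)) \<and>
     (\<forall>a x. aeq (R (hsmul H a x)) (\<lambda>t. a * R x t)) \<and>
     (\<exists>C. \<forall>x. L2norm (R x) \<le> C * hnorm H x)"

end

theory Submission
  imports Defs "HOL-Probability.Sinc_Integral"
begin

text \<open>For a normal operator N, ||N u||^2 = <u, N*N u> \<le> ||u|| ||N^2 u||, so an operator T similar
  to N satisfies ||T f||^2 \<le> K ||T^2 f|| ||f||. The truncated Fourier--Plancherel operator violates
  this on the test functions x_w = d/du (u^2 e^(-(1+iw)u)): both ||x_w|| and ||T x_w|| are of
  order w, since T x_w(t) = -2it / (sqrt (2 pi) (1+iw-it)^3) has size w on [w, w+1]. Applying T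
  twice gives, by Fubini and an Abel limit, the Stieltjes transform
  T^2 x_w(s) = (i / 2 pi) \<integral> x_w(u) / (s+u) du, and integrating by parts turns it into
  (i / 2 pi) \<integral> u^2 e^(-(1+iw)u) / (s+u)^2 du = O(1 / (1 + s^2)) uniformly in w. Hence
  ||T^2 x_w|| = O(1), and w^2 = O(w) is absurd.\<close>

section \<open>Operators similar to a normal operator\<close>

lemma L2norm_aeq:
  assumes "f \<in> L2p" "g \<in> L2p" "aeq f g"
  shows "L2norm f = L2norm g"
proof -
  have [measurable]: "f \<in> borel_measurable lborel" "g \<in> borel_measurable lborel"
    using assms unfolding L2p_def by auto
  have "AE x \<in> {0<..} in lborel. (cmod (f x))\<^sup>2 = (cmod (g x))\<^sup>2"
    using assms(3) unfolding aeq_def by (auto elim!: eventually_mono)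
  then have "(LINT x:{0<..}|lborel. (cmod (f x))\<^sup>2) = (LINT x:{0<..}|lborel. (cmod (g x))\<^sup>2)"
    by (intro set_lebesgue_integral_cong_AE) auto
  then show ?thesis unfolding L2norm_def by simp
qed

lemma L2norm_nonneg: "L2norm f \<ge> 0"
  unfolding L2norm_def set_lebesgue_integral_def
  by (simp add: Bochner_Integration.integral_nonneg_AE)

context
  fixes H :: "'h cH"
  assumes HS: "complex_hilbert_space H"
begin

lemma hip_add_left: "hip H (hadd H x y) z = hip H x z + hip H y z"
  using HS unfolding complex_hilbert_space_def by blast

lemma hip_smul_left: "hip H (hsmul H a x) y = a * hip H x y"
  using HS unfolding complex_hilbert_space_def by blast

lemma hip_conj: "hip H y x = cnj (hip H x y)"
  using HS unfolding complex_hilbert_space_def by blast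

lemma hip_self: "Im (hip H x x) = 0" "0 \<le> Re (hip H x x)"
  using HS unfolding complex_hilbert_space_def by blast+

lemma hnorm_nonneg: "hnorm H x \<ge> 0"
  unfolding hnorm_def using hip_self(2) by simp

lemma hip_self_eq_of_real: "hip H x x = complex_of_real (Re (hip H x x))"
  using hip_self(1)[of x] by (simp add: complex_eq_iff)

lemma hnorm_power2: "(hnorm H x)\<^sup>2 = Re (hip H x x)"
  unfolding hnorm_def using hip_self(2)[of x] by simp

lemma hip_add_right: "hip H x (hadd H y z) = hip H x y + hip H x z"
  by (metis hip_conj hip_add_left complex_cnj_add)

lemma hip_smul_right: "hip H x (hsmul H a y) = cnj a * hip H x y"
  by (metis hip_conj hip_smul_left complex_cnj_mult)

text \<open>Expansion of <z, z> \<ge> 0 for z = x - r <x, y> y.\<close>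

lemma hip_cauchy_schwarz_quadratic:
  fixes x y :: 'h and r :: real
  defines "p \<equiv> hip H x y"
  shows "0 \<le> Re (hip H x x) - 2 * r * (cmod p)\<^sup>2 + r\<^sup>2 * (cmod p)\<^sup>2 * Re (hip H y y)"
proof -
  define \<mu> where "\<mu> = - complex_of_real r * p"
  define z where "z = hadd H x (hsmul H \<mu> y)"
  have "hip H z z = hip H x x + \<mu> * hip H y x + cnj \<mu> * hip H x y + \<mu> * cnj \<mu> * hip H y y"
    unfolding z_def
    by (simp add: hip_add_left hip_add_right hip_smul_left hip_smul_right algebra_simps)
  also have "hip H y x = cnj p" unfolding p_def by (rule hip_conj)
  finally have z: "hip H z z = hip H x x + \<mu> * cnj p + cnj \<mu> * p + \<mu> * cnj \<mu> * hip H y y"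
    unfolding p_def .
  have "Re (hip H z z) = Re (hip H x x) - 2 * r * (cmod p)\<^sup>2 + r\<^sup>2 * (cmod p)\<^sup>2 * Re (hip H y y)"
    unfolding z \<mu>_def
    by (subst (2) hip_self_eq_of_real, simp add: cmod_power2, simp add: power2_eq_square algebra_simps)
  with hip_self(2)[of z] show ?thesis by simp
qed

lemma hip_cauchy_schwarz: "cmod (hip H x y) \<le> hnorm H x * hnorm H y"
proof -
  define p where "p = hip H x y"
  define X where "X = Re (hip H x x)"
  define Y where "Y = Re (hip H y y)"
  have X0: "X \<ge> 0" and Y0: "Y \<ge> 0" unfolding X_def Y_def using hip_self by auto
  have quadratic: "0 \<le> X - 2 * r * (cmod p)\<^sup>2 + r\<^sup>2 * (cmod p)\<^sup>2 * Y" for r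
    unfolding X_def Y_def p_def by (rule hip_cauchy_schwarz_quadratic)
  have "(cmod p)\<^sup>2 \<le> X * Y"
  proof (cases "Y = 0")
    case True
    have "(cmod p)\<^sup>2 \<le> 0"
    proof (rule ccontr)
      assume "\<not> (cmod p)\<^sup>2 \<le> 0"
      with quadratic[of "(X + 1) / (cmod p)\<^sup>2"] True X0 show False by simp
    qed
    then show ?thesis using True by simp
  next
    case False
    then have "Y > 0" using Y0 by simp
    with quadratic[of "1 / Y"] show ?thesis by (simp add: power2_eq_square field_simps)
  qed
  then have "cmod p \<le> sqrt (X * Y)" by (simp add: real_le_rsqrt)
  then show ?thesis unfolding p_def hnorm_def X_def Y_def by (simp add: real_sqrt_mult)
qed

text \<open>For normal N, ||N* v|| = ||N v||, hence <u, N*N u> \<le> ||u|| ||N*N u|| = ||u|| ||N^2 u||.\<close>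

lemma normal_op_hnorm_power2_le:
  assumes "normal_op H N"
  shows "(hnorm H (N u))\<^sup>2 \<le> hnorm H u * hnorm H (N (N u))"
proof -
  obtain Ns where adj: "\<And>x y. hip H (N x) y = hip H x (Ns y)" and comm: "\<And>x. N (Ns x) = Ns (N x)"
    using assms unfolding normal_op_def by blast
  have adj': "hip H (Ns x) y = hip H x (N y)" for x y
    by (metis adj hip_conj complex_cnj_cnj)
  have "(hnorm H (Ns v))\<^sup>2 = (hnorm H (N v))\<^sup>2" for v
    by (simp add: hnorm_power2 adj adj' comm)
  then have adj_norm: "hnorm H (Ns v) = hnorm H (N v)" for v
    by (metis hnorm_nonneg power2_eq_iff_nonneg)
  have "(hnorm H (N u))\<^sup>2 = Re (hip H u (Ns (N u)))"
    by (simp add: hnorm_power2 adj)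
  also have "\<dots> \<le> cmod (hip H u (Ns (N u)))" by (rule complex_Re_le_cmod)
  also have "\<dots> \<le> hnorm H u * hnorm H (N (N u))"
    using hip_cauchy_schwarz adj_norm by metis
  finally show ?thesis .
qed

end

lemma ex_nonneg_bound:
  fixes n1 n2 :: "'a \<Rightarrow> real"
  assumes "\<exists>C. \<forall>f\<in>A. n1 f \<le> C * n2 f" "\<And>f. n2 f \<ge> 0"
  obtains C where "C \<ge> 0" "\<forall>f\<in>A. n1 f \<le> C * n2 f"
proof -
  obtain C where C: "\<forall>f\<in>A. n1 f \<le> C * n2 f" using assms(1) by blast
  have "\<forall>f\<in>A. n1 f \<le> max C 0 * n2 f"
    using C assms(2) by (meson max.cobounded1 mult_right_mono order_trans)
  then show ?thesis using that[of "max C 0"] by auto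
qed

definition quadratic_norm_bound :: "((real \<Rightarrow> complex) \<Rightarrow> (real \<Rightarrow> complex)) \<Rightarrow> bool" where
  "quadratic_norm_bound T \<longleftrightarrow>
     (\<exists>K. \<forall>f\<in>L2p. (L2norm (T f))\<^sup>2 \<le> K * L2norm (T (T f)) * L2norm f)"

lemma similar_to_normal_imp_quadratic_norm_bound:
  fixes H :: "'h cH"
  assumes HS: "complex_hilbert_space H" and T: "bdd_op_L2 T"
    and S: "bdd_op_L2_H H S" and Sinv: "bdd_op_H_L2 H Sinv"
    and inv: "\<forall>x. S (Sinv x) = x" and N: "normal_op H N"
    and sim: "\<forall>f\<in>L2p. aeq (T f) (Sinv (N (S f)))"
  shows "quadratic_norm_bound T"
proof -
  obtain C1 where C1: "C1 \<ge> 0" "\<forall>x\<in>UNIV. L2norm (Sinv x) \<le> C1 * hnorm H x"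
    using ex_nonneg_bound[of UNIV "\<lambda>x. L2norm (Sinv x)" "hnorm H"] Sinv hnorm_nonneg[OF HS]
    unfolding bdd_op_H_L2_def by blast
  obtain C2 where C2: "C2 \<ge> 0" "\<forall>f\<in>L2p. hnorm H (S f) \<le> C2 * L2norm f"
    using ex_nonneg_bound[of L2p "\<lambda>f. hnorm H (S f)" L2norm] S L2norm_nonneg
    unfolding bdd_op_L2_H_def by blast
  have TL: "\<forall>f\<in>L2p. T f \<in> L2p" using T unfolding bdd_op_L2_def by blast
  have SinvL: "\<forall>x. Sinv x \<in> L2p" using Sinv unfolding bdd_op_H_L2_def by blast
  have S_aeq: "\<forall>f\<in>L2p. \<forall>g\<in>L2p. aeq f g \<longrightarrow> S f = S g" using S unfolding bdd_op_L2_H_def by blast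
  have ST: "S (T f) = N (S f)" if "f \<in> L2p" for f
    using S_aeq TL SinvL sim inv that by metis
  have "(L2norm (T f))\<^sup>2 \<le> (C1\<^sup>2 * C2\<^sup>2) * L2norm (T (T f)) * L2norm f" if f: "f \<in> L2p" for f
  proof -
    define u where "u = S f"
    have Tf: "T f \<in> L2p" and TTf: "T (T f) \<in> L2p" using TL f by blast+
    have STT: "S (T (T f)) = N (N u)" unfolding u_def using ST[OF f] ST[OF Tf] by simp
    have "L2norm (T f) = L2norm (Sinv (N u))"
      unfolding u_def by (rule L2norm_aeq) (use Tf SinvL sim f in auto)
    then have "L2norm (T f) \<le> C1 * hnorm H (N u)" using C1 by simp
    then have "(L2norm (T f))\<^sup>2 \<le> C1\<^sup>2 * (hnorm H (N u))\<^sup>2"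
      using L2norm_nonneg power_mono by (fastforce simp: power_mult_distrib)
    also have "\<dots> \<le> C1\<^sup>2 * (hnorm H u * hnorm H (N (N u)))"
      using normal_op_hnorm_power2_le[OF HS N] by (intro mult_left_mono) auto
    also have "\<dots> \<le> C1\<^sup>2 * ((C2 * L2norm f) * (C2 * L2norm (T (T f))))"
      using C2 f TTf STT u_def hnorm_nonneg[OF HS] L2norm_nonneg by (intro mult_left_mono mult_mono) auto
    finally show ?thesis by (simp add: power2_eq_square algebra_simps)
  qed
  then show ?thesis unfolding quadratic_norm_bound_def by blast
qed

section \<open>Integrals over the positive half-line\<close>

lemma set_integral_Ioi_FTC:
  fixes f F :: "real \<Rightarrow> complex"
  assumes F: "\<And>x. 0 < x \<Longrightarrow> (F has_vector_derivative f x) (at x)"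
    and f_cont: "\<And>x. 0 < x \<Longrightarrow> isCont f x"
    and f_int: "set_integrable lborel {0<..} f"
    and A: "(F \<longlongrightarrow> A) (at_right 0)"
    and B: "(F \<longlongrightarrow> B) at_top"
  shows "(LINT x:{0<..}|lborel. f x) = B - A"
proof -
  have "(LBINT x=ereal 0..\<infinity>. f x) = B - A"
  proof (rule interval_integral_FTC_integrable)
    show "set_integrable lborel (einterval (ereal 0) \<infinity>) f" using f_int by simp
    show "((F \<circ> real_of_ereal) \<longlongrightarrow> A) (at_right (ereal 0))"
      using A by (simp add: ereal_tendsto_simps1)
    show "((F \<circ> real_of_ereal) \<longlongrightarrow> B) (at_left \<infinity>)"
      using B by (simp add: ereal_tendsto_simps1)
  qed (use F f_cont in auto)
  then show ?thesis by (simp add: interval_integral_to_infinity_eq)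
qed

lemma
  fixes c :: real
  assumes c: "0 < c"
  shows set_integrable_exp_neg_Ioi: "set_integrable lborel {0<..} (\<lambda>t. exp (- c * t))"
    and set_integral_exp_neg_Ioi: "(LINT t:{0<..}|lborel. exp (- c * t)) = 1 / c"
proof -
  have d: "((\<lambda>t. - exp (- c * t) / c) has_real_derivative exp (- c * t)) (at t)" for t
    using c by (auto intro!: derivative_eq_intros)
  have l0: "(((\<lambda>t. - exp (- c * t) / c) \<circ> real_of_ereal) \<longlongrightarrow> - 1 / c) (at_right (ereal 0))"
    unfolding ereal_tendsto_simps1 using c by (auto intro!: tendsto_eq_intros)
  have l1: "(((\<lambda>t. - exp (- c * t) / c) \<circ> real_of_ereal) \<longlongrightarrow> 0) (at_left \<infinity>)"
    unfolding ereal_tendsto_simps1 using c by real_asymp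
  have "set_integrable lborel (einterval (ereal 0) \<infinity>) (\<lambda>t. exp (- c * t))"
    "(LBINT t=ereal 0..\<infinity>. exp (- c * t)) = 0 - (- 1 / c)"
    by (rule interval_integral_FTC_nonneg[OF _ d _ _ l0 l1]; simp)+
  then show "set_integrable lborel {0<..} (\<lambda>t. exp (- c * t))"
    "(LINT t:{0<..}|lborel. exp (- c * t)) = 1 / c"
    by (simp_all add: interval_integral_to_infinity_eq)
qed

lemma set_integral_cexp_Ioi:
  fixes z :: complex
  assumes z: "Re z < 0"
  shows "(LINT t:{0<..}|lborel. exp (z * of_real t)) = - 1 / z"
proof -
  have z0: "z \<noteq> 0" using z by auto
  have norm_exp: "norm (exp (z * of_real t)) = exp (Re z * t)" for t
    by (simp add: norm_exp_eq_Re)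
  have int: "set_integrable lborel {0<..} (\<lambda>t. exp (z * of_real t))"
    by (rule set_integrable_bound[where f = "\<lambda>t. exp (Re z * t)"])
       (use set_integrable_exp_neg_Ioi[of "- Re z"] z in \<open>auto simp: norm_exp set_borel_measurable_def\<close>)
  have "(LINT t:{0<..}|lborel. exp (z * of_real t)) = 0 - 1 / z"
  proof (rule set_integral_Ioi_FTC[where F = "\<lambda>t. exp (z * of_real t) / z"])
    show "((\<lambda>t. exp (z * of_real t) / z) has_vector_derivative exp (z * of_real x)) (at x)" for x
    proof -
      have "((\<lambda>w. exp (z * w) / z) has_field_derivative exp (z * of_real x)) (at (of_real x))"
        using z0 by (auto intro!: derivative_eq_intros)
      then show ?thesis by (rule has_vector_derivative_real_field)
    qed
    show "((\<lambda>t. exp (z * of_real t) / z) \<longlongrightarrow> 1 / z) (at_right 0)"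
      using z0 by (auto intro!: tendsto_eq_intros)
    have "((\<lambda>t. exp (Re z * t)) \<longlongrightarrow> 0) at_top"
      using z by real_asymp
    then have "((\<lambda>t. exp (Re z * t) / cmod z) \<longlongrightarrow> 0) at_top"
      by (rule tendsto_divide_zero)
    then show "((\<lambda>t. exp (z * of_real t) / z) \<longlongrightarrow> 0) at_top"
      by (rule tendsto_norm_zero_cancel[OF Lim_transform_eventually])
         (auto simp: norm_divide norm_exp)
  qed (use int in auto)
  then show ?thesis by simp
qed

lemma tendsto_poly2_cexp_at_top:
  fixes \<alpha> \<beta> \<gamma> c :: complex
  assumes c: "0 < Re c"
  shows "((\<lambda>u::real. (\<alpha> * (of_real u)\<^sup>2 + \<beta> * of_real u + \<gamma>) * exp (- c * of_real u)) \<longlongrightarrow> 0) at_top"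
proof (rule Lim_null_comparison)
  show "((\<lambda>u. (cmod \<alpha> * u\<^sup>2 + cmod \<beta> * u + cmod \<gamma>) * exp (- Re c * u)) \<longlongrightarrow> 0) at_top"
    using c by real_asymp
  have bound: "norm ((\<alpha> * (of_real u)\<^sup>2 + \<beta> * of_real u + \<gamma>) * exp (- c * of_real u))
      \<le> (cmod \<alpha> * u\<^sup>2 + cmod \<beta> * u + cmod \<gamma>) * exp (- Re c * u)" if "0 \<le> u" for u
  proof -
    have "norm (\<alpha> * (of_real u)\<^sup>2 + \<beta> * of_real u + \<gamma>)
        \<le> norm (\<alpha> * (of_real u)\<^sup>2) + norm (\<beta> * of_real u) + norm \<gamma>"
      by (rule order_trans[OF norm_triangle_ineq add_right_mono[OF norm_triangle_ineq]])
    also have "\<dots> = cmod \<alpha> * u\<^sup>2 + cmod \<beta> * u + cmod \<gamma>"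
      using that by (simp add: norm_mult norm_power)
    finally have "norm (\<alpha> * (of_real u)\<^sup>2 + \<beta> * of_real u + \<gamma>) \<le> cmod \<alpha> * u\<^sup>2 + cmod \<beta> * u + cmod \<gamma>" .
    then show ?thesis by (simp add: norm_mult norm_exp_eq_Re mult_right_mono)
  qed
  show "\<forall>\<^sub>F u in at_top. norm ((\<alpha> * (of_real u)\<^sup>2 + \<beta> * of_real u + \<gamma>) * exp (- c * of_real u))
      \<le> (cmod \<alpha> * u\<^sup>2 + cmod \<beta> * u + cmod \<gamma>) * exp (- Re c * u)"
    using eventually_ge_at_top[of 0] by (rule eventually_mono) (rule bound)
qed

lemma set_integrable_inverse_1_plus_square_shift:
  "set_integrable lborel {0<..} (\<lambda>t::real. inverse (1 + (t - w)\<^sup>2))"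
proof -
  have "integrable lborel (\<lambda>x::real. inverse (1 + x^2))"
    using integrable_inverse_1_plus_square by (simp add: set_integrable_def)
  then have "integrable lborel (\<lambda>x. inverse (1 + ((- w) + 1 * x)^2))"
    using lborel_integrable_real_affine_iff[where f="\<lambda>x::real. inverse (1 + x^2)" and c=1 and t="-w"]
    by simp
  then show ?thesis unfolding set_integrable_def
    by (intro integrable_mult_indicator) auto
qed

lemma mult_exp_neg_le: "0 \<le> (u::real) \<Longrightarrow> u * exp (- u) \<le> 2 * exp (- u / 2)"
proof -
  assume u: "0 \<le> u"
  have "u \<le> 2 * exp (u / 2)" using exp_ge_add_one_self[of "u/2"] by linarith
  then have "u * exp (- u) \<le> 2 * exp (u / 2) * exp (- u)" by (intro mult_right_mono) auto
  also have "\<dots> = 2 * exp (- u / 2)" by (simp add: mult.assoc exp_add[symmetric])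
  finally show ?thesis .
qed

lemma power2_mult_exp_neg_le: "0 \<le> (u::real) \<Longrightarrow> u\<^sup>2 * exp (- u) \<le> 16 * exp (- u / 2)"
proof -
  assume u: "0 \<le> u"
  have "u / 4 \<le> exp (u / 4)" using exp_ge_add_one_self[of "u/4"] by linarith
  then have "(u / 4)\<^sup>2 \<le> (exp (u / 4))\<^sup>2" using u by (intro power_mono) auto
  also have "(exp (u / 4))\<^sup>2 = exp (u / 2)" by (simp add: power2_eq_square exp_add[symmetric])
  finally have "u\<^sup>2 \<le> 16 * exp (u / 2)" by (simp add: power_divide)
  then have "u\<^sup>2 * exp (- u) \<le> 16 * exp (u / 2) * exp (- u)" by (intro mult_right_mono) auto
  also have "\<dots> = 16 * exp (- u / 2)" by (simp add: mult.assoc exp_add[symmetric])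
  finally show ?thesis .
qed

lemma set_integral_Ioi_swap:
  fixes x :: "real \<Rightarrow> complex" and E :: "real \<Rightarrow> real \<Rightarrow> complex" and k :: "real \<Rightarrow> real"
  assumes [measurable]: "x \<in> borel_measurable lborel"
      "(\<lambda>(u, t). E u t) \<in> borel_measurable (lborel \<Otimes>\<^sub>M lborel)"
    and x: "set_integrable lborel {0<..} x" and k: "set_integrable lborel {0<..} k"
    and E: "\<And>u t. norm (E u t) \<le> k t"
  shows "(LINT t:{0<..}|lborel. LINT u:{0<..}|lborel. x u * E u t)
       = (LINT u:{0<..}|lborel. x u * (LINT t:{0<..}|lborel. E u t))"
proof -
  define F where "F u t = (indicator {0<..} u *\<^sub>R x u) * (indicator {0<..} t *\<^sub>R E u t)" for u t
  have [measurable]: "(\<lambda>(u, t). F u t) \<in> borel_measurable (lborel \<Otimes>\<^sub>M lborel)"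
    unfolding F_def by measurable
  have E_int: "set_integrable lborel {0<..} (E u)" for u
    by (rule set_integrable_bound[OF k])
       (auto simp: set_borel_measurable_def intro: order_trans[OF E abs_ge_self])
  have x_norm_int: "integrable lborel (\<lambda>u. indicator {0<..} u * norm (x u))"
    using integrable_norm[OF x[unfolded set_integrable_def]] by (simp add: abs_mult)
  have "integrable (lborel \<Otimes>\<^sub>M lborel) (\<lambda>(u, t). F u t)"
  proof (rule lborel_pair.Fubini_integrable)
    have "(\<lambda>t. norm (F u t)) =
        (\<lambda>t. (indicator {0<..} u * norm (x u)) * (indicator {0<..} t * norm (E u t)))" for u
      by (auto simp: F_def norm_mult split: split_indicator)
    then have norm_F: "(\<integral>t. norm (F u t) \<partial>lborel)
        = indicator {0<..} u * norm (x u) * (LINT t:{0<..}|lborel. norm (E u t))" for u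
      by (simp add: set_lebesgue_integral_def)
    have "(LINT t:{0<..}|lborel. norm (E u t)) \<le> (LINT t:{0<..}|lborel. k t)" for u
      by (rule set_integral_mono[OF set_integrable_norm[OF E_int] k]) (rule E)
    moreover have "0 \<le> (LINT t:{0<..}|lborel. norm (E u t))" for u
      by (simp add: set_lebesgue_integral_def)
    ultimately have bound: "(\<integral>t. norm (F u t) \<partial>lborel)
        \<le> indicator {0<..} u * norm (x u) * (LINT t:{0<..}|lborel. k t)" for u
      unfolding norm_F by (intro mult_left_mono) auto
    have "integrable lborel (\<lambda>u. indicator {0<..} u * norm (x u) * (LINT t:{0<..}|lborel. k t))"
      using x_norm_int by (rule integrable_mult_left)
    then show "integrable lborel (\<lambda>u. \<integral>t. norm (case (u, t) of (u, t) \<Rightarrow> F u t) \<partial>lborel)"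
      by (rule Bochner_Integration.integrable_bound)
         (auto intro!: AE_I2 order_trans[OF bound abs_ge_self])
    show "AE u in lborel. integrable lborel (\<lambda>t. case (u, t) of (u, t) \<Rightarrow> F u t)"
      unfolding case_prod_conv F_def
      by (intro AE_I2 integrable_mult_right E_int[unfolded set_integrable_def])
  qed simp
  then have "(\<integral>t. \<integral>u. F u t \<partial>lborel \<partial>lborel) = (\<integral>u. \<integral>t. F u t \<partial>lborel \<partial>lborel)"
    by (rule lborel_pair.Fubini_integral)
  moreover have "(\<integral>u. F u t \<partial>lborel) = indicator {0<..} t *\<^sub>R (LINT u:{0<..}|lborel. x u * E u t)" for t
    by (auto simp: F_def set_lebesgue_integral_def split: split_indicator)
  moreover have "(\<integral>t. F u t \<partial>lborel) = indicator {0<..} u *\<^sub>R (x u * (LINT t:{0<..}|lborel. E u t))" for u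
    unfolding F_def integral_mult_right_zero by (simp add: set_lebesgue_integral_def)
  ultimately show ?thesis by (simp add: set_lebesgue_integral_def)
qed

lemma tendsto_set_integral_Ioi_exp_damping:
  fixes g :: "real \<Rightarrow> complex"
  assumes [measurable]: "g \<in> borel_measurable lborel"
    and g: "set_integrable lborel {0<..} g" and e: "e \<longlonglongrightarrow> 0" "\<And>n. 0 \<le> e n"
  shows "(\<lambda>n. LINT t:{0<..}|lborel. g t * of_real (exp (- e n * t))) \<longlonglongrightarrow> (LINT t:{0<..}|lborel. g t)"
  unfolding set_lebesgue_integral_def
proof (rule integral_dominated_convergence[where w = "\<lambda>t. indicator {0<..} t * norm (g t)"])
  show "integrable lborel (\<lambda>t. indicator {0<..} t * norm (g t))"
    using integrable_norm[OF g[unfolded set_integrable_def]] by (simp add: abs_mult)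
  have "(\<lambda>n. g t * of_real (exp (- e n * t))) \<longlonglongrightarrow> g t * of_real (exp (- 0 * t))" for t
    by (intro tendsto_intros e)
  then show "AE t in lborel. (\<lambda>n. indicator {0<..} t *\<^sub>R (g t * of_real (exp (- e n * t))))
      \<longlonglongrightarrow> indicator {0<..} t *\<^sub>R g t"
    by (intro AE_I2 tendsto_scaleR tendsto_const) simp
  show "AE t in lborel. norm (indicator {0<..} t *\<^sub>R (g t * of_real (exp (- e n * t))))
      \<le> indicator {0<..} t * norm (g t)" for n
    using e(2)[of n]
    by (intro AE_I2) (auto simp: norm_mult split: split_indicator intro!: mult_left_le)
qed simp_all

lemma tendsto_set_integral_Ioi_resolvent:
  fixes x :: "real \<Rightarrow> complex"
  assumes [measurable]: "x \<in> borel_measurable lborel"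
    and x: "set_integrable lborel {0<..} x" and s: "0 < s" and e: "e \<longlonglongrightarrow> 0"
  shows "(\<lambda>n. LINT u:{0<..}|lborel. x u / (of_real (e n) - \<i> * of_real (s + u)))
      \<longlonglongrightarrow> (LINT u:{0<..}|lborel. x u / (- \<i> * of_real (s + u)))"
  unfolding set_lebesgue_integral_def
proof (rule integral_dominated_convergence[where w = "\<lambda>u. indicator {0<..} u * norm (x u) / s"])
  show "integrable lborel (\<lambda>u. indicator {0<..} u * norm (x u) / s)"
    using integrable_norm[OF x[unfolded set_integrable_def]] by (simp add: abs_mult)
  have "(\<lambda>n. x u / (of_real (e n) - \<i> * of_real (s + u))) \<longlonglongrightarrow> x u / (of_real 0 - \<i> * of_real (s + u))"
    if "0 < u" for u
    using s that by (intro tendsto_intros e) (simp add: complex_eq_iff)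
  then show "AE u in lborel. (\<lambda>n. indicator {0<..} u *\<^sub>R (x u / (of_real (e n) - \<i> * of_real (s + u))))
      \<longlonglongrightarrow> indicator {0<..} u *\<^sub>R (x u / (- \<i> * of_real (s + u)))"
    by (intro AE_I2) (auto split: split_indicator)
  have "norm (x u / (of_real (e n) - \<i> * of_real (s + u))) \<le> norm (x u) / s" if "0 < u" for u n
  proof -
    have "s \<le> \<bar>Im (of_real (e n) - \<i> * of_real (s + u))\<bar>" using that s by simp
    also have "\<dots> \<le> cmod (of_real (e n) - \<i> * of_real (s + u))" by (rule abs_Im_le_cmod)
    finally have "s \<le> cmod (of_real (e n) - \<i> * of_real (s + u))" .
    then have "norm (x u) / cmod (of_real (e n) - \<i> * of_real (s + u)) \<le> norm (x u) / s"
      using s by (intro divide_left_mono) (auto intro!: mult_pos_pos)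
    then show ?thesis by (simp only: norm_divide)
  qed
  then show "AE u in lborel. norm (indicator {0<..} u *\<^sub>R (x u / (of_real (e n) - \<i> * of_real (s + u))))
      \<le> indicator {0<..} u * norm (x u) / s" for n
    by (intro AE_I2) (auto split: split_indicator)
qed simp_all

lemma Fourier_Ioi_twice_damped:
  fixes x g :: "real \<Rightarrow> complex"
  assumes [measurable]: "x \<in> borel_measurable lborel"
    and x: "set_integrable lborel {0<..} x"
    and g: "\<And>t. 0 < t \<Longrightarrow> g t = (LINT u:{0<..}|lborel. x u * exp (\<i> * of_real t * of_real u))"
    and e: "0 < e"
  shows "(LINT t:{0<..}|lborel. g t * exp (\<i> * of_real s * of_real t) * of_real (exp (- e * t)))
       = (LINT u:{0<..}|lborel. x u / (of_real e - \<i> * of_real (s + u)))"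
proof -
  define E where "E u t = exp ((\<i> * of_real (s + u) - of_real e) * of_real t)" for u t :: real
  have [measurable]: "(\<lambda>(u, t). E u t) \<in> borel_measurable (lborel \<Otimes>\<^sub>M lborel)"
    unfolding E_def by measurable
  have norm_E: "norm (E u t) = exp (- e * t)" for u t
    by (simp add: E_def norm_exp_eq_Re)
  have E_eq: "exp (\<i> * (of_real t * of_real u)) *
      (exp (\<i> * (of_real s * of_real t)) * of_real (exp (- e * t)))
      = E u t" for u t
    unfolding E_def exp_of_real[symmetric] mult_exp_exp
    by (rule arg_cong[where f = exp]) (simp add: algebra_simps)
  have "g t * exp (\<i> * of_real s * of_real t) * of_real (exp (- e * t))
      = (LINT u:{0<..}|lborel. x u * E u t)" if "0 < t" for t
    by (simp only: g[OF that] mult.assoc E_eq flip: set_integral_mult_left)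
  then have "(LINT t:{0<..}|lborel. g t * exp (\<i> * of_real s * of_real t) * of_real (exp (- e * t)))
      = (LINT t:{0<..}|lborel. LINT u:{0<..}|lborel. x u * E u t)"
    by (intro set_lebesgue_integral_cong) auto
  also have "\<dots> = (LINT u:{0<..}|lborel. x u * (LINT t:{0<..}|lborel. E u t))"
    by (rule set_integral_Ioi_swap[where k = "\<lambda>t. exp (- e * t)"])
       (use x set_integrable_exp_neg_Ioi[OF e] norm_E in auto)
  also have "\<dots> = (LINT u:{0<..}|lborel. x u / (of_real e - \<i> * of_real (s + u)))"
    using e unfolding E_def
    by (intro set_lebesgue_integral_cong) (auto simp: set_integral_cexp_Ioi minus_divide_right)
  finally show ?thesis .
qed

text \<open>The iterated integral is not absolutely convergent: it is damped by exp (- e t) first, and the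
  damping is removed by an Abel limit.\<close>

lemma Fourier_Ioi_twice:
  fixes x g :: "real \<Rightarrow> complex"
  assumes [measurable]: "x \<in> borel_measurable lborel" "g \<in> borel_measurable lborel"
    and x: "set_integrable lborel {0<..} x" and g_int: "set_integrable lborel {0<..} g"
    and g: "\<And>t. 0 < t \<Longrightarrow> g t = (LINT u:{0<..}|lborel. x u * exp (\<i> * of_real t * of_real u))"
    and s: "0 < s"
  shows "(LINT t:{0<..}|lborel. g t * exp (\<i> * of_real s * of_real t))
       = \<i> * (LINT u:{0<..}|lborel. x u / of_real (s + u))"
proof -
  define e where "e n = inverse (real (Suc n))" for n
  have e: "e \<longlonglongrightarrow> 0" "0 < e n" for n
    unfolding e_def[abs_def] by (rule LIMSEQ_inverse_real_of_nat) simp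
  have "set_integrable lborel {0<..} (\<lambda>t. g t * exp (\<i> * of_real s * of_real t))"
    by (rule set_integrable_bound[OF g_int])
       (auto simp: set_borel_measurable_def norm_mult intro!: AE_I2)
  then have "(\<lambda>n. LINT t:{0<..}|lborel. g t * exp (\<i> * of_real s * of_real t) * of_real (exp (- e n * t)))
      \<longlonglongrightarrow> (LINT t:{0<..}|lborel. g t * exp (\<i> * of_real s * of_real t))"
    using e by (intro tendsto_set_integral_Ioi_exp_damping) (auto intro: less_imp_le)
  moreover have "(\<lambda>n. LINT t:{0<..}|lborel. g t * exp (\<i> * of_real s * of_real t) * of_real (exp (- e n * t)))
      \<longlonglongrightarrow> (LINT u:{0<..}|lborel. x u / (- \<i> * of_real (s + u)))"
    using tendsto_set_integral_Ioi_resolvent[OF assms(1) x s e(1)]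
    by (simp only: Fourier_Ioi_twice_damped[OF assms(1) x g e(2)])
  ultimately have "(LINT t:{0<..}|lborel. g t * exp (\<i> * of_real s * of_real t))
      = (LINT u:{0<..}|lborel. x u / (- \<i> * of_real (s + u)))"
    by (rule LIMSEQ_unique)
  also have "\<dots> = (LINT u:{0<..}|lborel. \<i> * (x u / of_real (s + u)))"
    by (rule set_lebesgue_integral_cong) (auto simp: divide_inverse inverse_mult_distrib)
  also have "\<dots> = \<i> * (LINT u:{0<..}|lborel. x u / of_real (s + u))"
    by (rule set_integral_mult_right)
  finally show ?thesis .
qed

section \<open>The test functions and their transforms\<close>

definition test_rate :: "real \<Rightarrow> complex" where
  "test_rate w = Complex 1 w"

definition test_prim :: "real \<Rightarrow> real \<Rightarrow> complex" where
  "test_prim w u = (of_real u)\<^sup>2 * exp (- test_rate w * of_real u)"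

text \<open>The derivative of \<^term>\<open>test_prim w\<close>.\<close>

definition test_fun :: "real \<Rightarrow> real \<Rightarrow> complex" where
  "test_fun w u = (2 * of_real u - test_rate w * (of_real u)\<^sup>2) * exp (- test_rate w * of_real u)"

definition test_transform :: "real \<Rightarrow> real \<Rightarrow> complex" where
  "test_transform w t = - 2 * \<i> * of_real t / (test_rate w - \<i> * of_real t) ^ 3"

definition FP_const :: complex where
  "FP_const = complex_of_real (1 / sqrt (2 * pi))"

definition FP_test_fun :: "real \<Rightarrow> real \<Rightarrow> complex" where
  "FP_test_fun w t = FP_const * test_transform w t"

lemma test_prim_measurable [measurable]: "test_prim w \<in> borel_measurable lborel"
  unfolding test_prim_def by measurable

lemma test_fun_measurable [measurable]: "test_fun w \<in> borel_measurable lborel"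
  unfolding test_fun_def by measurable

lemma FP_test_fun_measurable [measurable]: "FP_test_fun w \<in> borel_measurable lborel"
  unfolding FP_test_fun_def test_transform_def by measurable

lemma Re_test_rate [simp]: "Re (test_rate w) = 1"
  by (simp add: test_rate_def)

lemma cmod_test_rate_le: "0 \<le> w \<Longrightarrow> cmod (test_rate w) \<le> 1 + w"
  unfolding test_rate_def cmod_def
  by (rule real_le_lsqrt) (auto simp: power2_eq_square algebra_simps)

lemma norm_exp_test_rate: "norm (exp (- test_rate w * of_real u)) = exp (- u)"
  by (simp add: norm_exp_eq_Re)

lemma norm_test_prim: "norm (test_prim w u) = u\<^sup>2 * exp (- u)"
  unfolding test_prim_def norm_mult norm_exp_test_rate by (simp add: norm_power)

lemma norm_test_fun_le:
  assumes w: "0 \<le> w" and u: "0 \<le> u"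
  shows "norm (test_fun w u) \<le> 20 * (1 + w) * exp (- u / 2)"
proof -
  have "norm (2 * of_real u - test_rate w * (of_real u)\<^sup>2)
      \<le> norm (2 * (of_real u :: complex)) + norm (test_rate w * (of_real u)\<^sup>2)"
    by (rule norm_triangle_ineq4)
  also have "\<dots> = 2 * u + cmod (test_rate w) * u\<^sup>2" using u by (simp add: norm_mult norm_power)
  also have "\<dots> \<le> (1 + w) * (2 * u) + (1 + w) * u\<^sup>2"
    using cmod_test_rate_le[OF w] mult_nonneg_nonneg[OF w u] u
    by (intro add_mono mult_right_mono) (auto simp: algebra_simps)
  also have "\<dots> = (1 + w) * (2 * u + u\<^sup>2)" by (simp add: algebra_simps)
  finally have poly: "norm (2 * of_real u - test_rate w * (of_real u)\<^sup>2) \<le> (1 + w) * (2 * u + u\<^sup>2)" .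
  have "norm (test_fun w u) = norm (2 * of_real u - test_rate w * (of_real u)\<^sup>2) * exp (- u)"
    unfolding test_fun_def norm_mult norm_exp_test_rate ..
  also have "\<dots> \<le> (1 + w) * (2 * u + u\<^sup>2) * exp (- u)"
    using poly by (rule mult_right_mono) simp
  also have "\<dots> = (1 + w) * (2 * (u * exp (- u)) + u\<^sup>2 * exp (- u))" by (simp add: algebra_simps)
  also have "\<dots> \<le> (1 + w) * (2 * (2 * exp (- u / 2)) + 16 * exp (- u / 2))"
    using mult_exp_neg_le[OF u] power2_mult_exp_neg_le[OF u] w by (intro mult_left_mono add_mono) auto
  finally show ?thesis by (simp add: algebra_simps)
qed

lemma set_integrable_test_fun: "0 \<le> w \<Longrightarrow> set_integrable lborel {0<..} (test_fun w)"
  by (rule set_integrable_bound[where f = "\<lambda>u. 20 * (1 + w) * exp (- (1/2) * u)"])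
     (use set_integrable_exp_neg_Ioi[of "1/2"] norm_test_fun_le in
      \<open>auto simp: set_borel_measurable_def intro!: AE_I2\<close>)

lemma norm_test_fun_power2_le:
  assumes w: "0 \<le> w" and u: "0 \<le> u"
  shows "(cmod (test_fun w u))\<^sup>2 \<le> 400 * (1 + w)\<^sup>2 * exp (- 1 * u)"
proof -
  have "(cmod (test_fun w u))\<^sup>2 \<le> (20 * (1 + w) * exp (- u / 2))\<^sup>2"
    using norm_test_fun_le[OF w u] by (intro power_mono) auto
  also have "\<dots> = 400 * (1 + w)\<^sup>2 * (exp (- u / 2))\<^sup>2" unfolding power_mult_distrib by simp
  also have "(exp (- u / 2))\<^sup>2 = exp (- 1 * u)" by (simp add: power2_eq_square flip: exp_add)
  finally show ?thesis .
qed

lemma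
  assumes w: "0 \<le> w"
  shows test_fun_L2p: "test_fun w \<in> L2p"
    and L2norm_test_fun_le: "L2norm (test_fun w) \<le> 20 * (1 + w)"
proof -
  have dom: "set_integrable lborel {0<..} (\<lambda>u. 400 * (1 + w)\<^sup>2 * exp (- 1 * u))"
    using set_integrable_exp_neg_Ioi[of 1] by simp
  have sq_int: "set_integrable lborel {0<..} (\<lambda>u. (cmod (test_fun w u))\<^sup>2)"
    by (rule set_integrable_bound[OF dom])
       (use norm_test_fun_power2_le[OF w] in \<open>auto simp: set_borel_measurable_def intro!: AE_I2\<close>)
  then show "test_fun w \<in> L2p" unfolding L2p_def by simp
  have "(LINT u:{0<..}|lborel. (cmod (test_fun w u))\<^sup>2)
      \<le> (LINT u:{0<..}|lborel. 400 * (1 + w)\<^sup>2 * exp (- 1 * u))"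
    by (rule set_integral_mono[OF sq_int dom]) (use norm_test_fun_power2_le[OF w] in auto)
  also have "\<dots> = 400 * (1 + w)\<^sup>2 * (LINT u:{0<..}|lborel. exp (- 1 * u))"
    by (rule set_integral_mult_right)
  also have "\<dots> = (20 * (1 + w))\<^sup>2"
    using set_integral_exp_neg_Ioi[of 1] unfolding power_mult_distrib by simp
  finally have "sqrt (LINT u:{0<..}|lborel. (cmod (test_fun w u))\<^sup>2) \<le> sqrt ((20 * (1 + w))\<^sup>2)"
    by (rule real_sqrt_le_mono)
  then show "L2norm (test_fun w) \<le> 20 * (1 + w)"
    unfolding L2norm_def using w by simp
qed

lemma set_integral_test_fun_Fourier:
  assumes w: "0 \<le> w"
  shows "(LINT u:{0<..}|lborel. test_fun w u * exp (\<i> * of_real t * of_real u)) = test_transform w t"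
proof -
  define a where "a = test_rate w"
  define c where "c = a - \<i> * of_real t"
  have Re_c: "Re c = 1" unfolding c_def a_def by simp
  then have "c \<noteq> 0" by auto
  define \<alpha> \<beta> \<gamma> where "\<alpha> = a / c" and "\<beta> = 2 * (a - c) / c^2" and "\<gamma> = 2 * (a - c) / c^3"
  define G where "G z = (\<alpha> * z\<^sup>2 + \<beta> * z + \<gamma>) * exp (- c * z)" for z
  have G': "(G has_field_derivative ((2 * z - a * z\<^sup>2) * exp (- c * z))) (at z)" for z
  proof -
    have "(G has_field_derivative
        (2 * \<alpha> * z + \<beta>) * exp (- c * z) + (\<alpha> * z\<^sup>2 + \<beta> * z + \<gamma>) * (exp (- c * z) * (- c))) (at z)"
      unfolding G_def by (auto intro!: derivative_eq_intros simp: algebra_simps power2_eq_square)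
    also have "(2 * \<alpha> * z + \<beta>) * exp (- c * z) + (\<alpha> * z\<^sup>2 + \<beta> * z + \<gamma>) * (exp (- c * z) * (- c))
        = (2 * \<alpha> * z + \<beta> - c * (\<alpha> * z\<^sup>2 + \<beta> * z + \<gamma>)) * exp (- c * z)"
      by (simp add: algebra_simps)
    also have "2 * \<alpha> * z + \<beta> - c * (\<alpha> * z\<^sup>2 + \<beta> * z + \<gamma>) = 2 * z - a * z\<^sup>2"
      unfolding \<alpha>_def \<beta>_def \<gamma>_def using \<open>c \<noteq> 0\<close>
      by (simp add: field_simps power2_eq_square power3_eq_cube)
    finally show ?thesis .
  qed
  have integrand: "test_fun w u * exp (\<i> * of_real t * of_real u)
      = (2 * of_real u - a * (of_real u)\<^sup>2) * exp (- c * of_real u)" for u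
  proof -
    have "exp (- a * of_real u) * exp (\<i> * of_real t * of_real u) = exp (- c * of_real u)"
      unfolding c_def mult_exp_exp by (rule arg_cong[where f = exp]) (simp add: algebra_simps)
    then show ?thesis unfolding test_fun_def a_def[symmetric] by (metis mult.assoc)
  qed
  have "(LINT u:{0<..}|lborel. test_fun w u * exp (\<i> * of_real t * of_real u)) = 0 - \<gamma>"
  proof (rule set_integral_Ioi_FTC[where F = "\<lambda>u. G (of_real u)"])
    show "((\<lambda>u. G (of_real u)) has_vector_derivative test_fun w x * exp (\<i> * of_real t * of_real x))
        (at x)" for x
      unfolding integrand by (rule has_vector_derivative_real_field[OF G'])
    show "isCont (\<lambda>x. test_fun w x * exp (\<i> * of_real t * of_real x)) x" for x
      unfolding test_fun_def by (intro continuous_intros)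
    show "set_integrable lborel {0<..} (\<lambda>x. test_fun w x * exp (\<i> * of_real t * of_real x))"
      by (rule set_integrable_bound[OF set_integrable_test_fun[OF w]])
         (auto simp: set_borel_measurable_def norm_mult)
    have "((\<lambda>u. G (of_real u)) \<longlongrightarrow> G (of_real 0)) (at_right 0)"
      unfolding G_def by (intro tendsto_intros)
    then show "((\<lambda>u. G (of_real u)) \<longlongrightarrow> \<gamma>) (at_right 0)" by (simp add: G_def)
    show "((\<lambda>u. G (of_real u)) \<longlongrightarrow> 0) at_top"
      unfolding G_def using Re_c by (intro tendsto_poly2_cexp_at_top) simp
  qed
  also have "0 - \<gamma> = test_transform w t"
    unfolding \<gamma>_def test_transform_def c_def a_def by (simp add: field_simps)
  finally show ?thesis .
qed

lemma norm_FP_const: "cmod FP_const = 1 / sqrt (2 * pi)"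
  unfolding FP_const_def by (simp only: norm_of_real) simp

lemma norm_FP_const_power2: "(cmod FP_const)\<^sup>2 = 1 / (2 * pi)"
  unfolding norm_FP_const by (simp add: power_divide)

lemma norm_test_transform: "cmod (test_transform w t) = 2 * \<bar>t\<bar> / (sqrt (1 + (t - w)\<^sup>2)) ^ 3"
proof -
  have "test_rate w - \<i> * of_real t = Complex 1 (w - t)" by (simp add: test_rate_def complex_eq_iff)
  then have "cmod (test_rate w - \<i> * of_real t) = sqrt (1 + (t - w)\<^sup>2)"
    by (simp add: cmod_def power2_commute)
  then show ?thesis unfolding test_transform_def by (simp add: norm_divide norm_mult norm_power)
qed

lemma norm_test_transform_le:
  assumes w: "0 \<le> w" and t: "0 < t"
  shows "cmod (test_transform w t) \<le> 2 * (1 + w) * inverse (1 + (t - w)\<^sup>2)"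
proof -
  define N where "N = sqrt (1 + (t - w)\<^sup>2)"
  have N1: "1 \<le> N" unfolding N_def by simp
  have "t \<le> \<bar>t - w\<bar> + w" by simp
  also have "\<bar>t - w\<bar> \<le> N" unfolding N_def by (rule real_le_rsqrt) simp
  also have "N + w \<le> (1 + w) * N" using mult_left_mono[OF N1 w] by (simp add: algebra_simps)
  finally have tN: "t \<le> (1 + w) * N" by simp
  have "cmod (test_transform w t) = 2 * t / N ^ 3" unfolding norm_test_transform N_def using t by simp
  also have "\<dots> \<le> 2 * ((1 + w) * N) / N ^ 3" using tN N1 by (intro divide_right_mono) auto
  also have "\<dots> = 2 * (1 + w) / N\<^sup>2" using N1 by (simp add: power2_eq_square power3_eq_cube)
  also have "N\<^sup>2 = 1 + (t - w)\<^sup>2" unfolding N_def by simp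
  finally show ?thesis by (simp add: divide_inverse)
qed

lemma norm_test_transform_ge:
  assumes w: "0 \<le> w" and t: "w \<le> t" "t \<le> w + 1"
  shows "w\<^sup>2 / 2 \<le> (cmod (test_transform w t))\<^sup>2"
proof -
  define N where "N = sqrt (1 + (t - w)\<^sup>2)"
  have "(t - w)\<^sup>2 \<le> 1" using t by (intro power_le_one) auto
  then have "N\<^sup>2 \<le> 2" unfolding N_def by simp
  then have N6: "(N ^ 3)\<^sup>2 \<le> 8"
    using power_mono[of "N\<^sup>2" 2 3] by (simp flip: power_mult)
  have "0 < N" unfolding N_def by (simp add: add_pos_nonneg)
  have "4 * w\<^sup>2 / 8 \<le> 4 * t\<^sup>2 / (N ^ 3)\<^sup>2"
    using w t N6 \<open>0 < N\<close> by (intro frac_le mult_left_mono power_mono) auto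
  also have "\<dots> = (cmod (test_transform w t))\<^sup>2"
    unfolding norm_test_transform N_def[symmetric] by (simp add: power_divide power_mult_distrib)
  finally show ?thesis by simp
qed

lemma norm_FP_test_fun_le:
  assumes "0 \<le> w" "0 < t"
  shows "cmod (FP_test_fun w t) \<le> (2 * (1 + w) / sqrt (2 * pi)) * inverse (1 + (t - w)\<^sup>2)"
  using mult_left_mono[OF norm_test_transform_le[OF assms], of "1 / sqrt (2 * pi)"]
  unfolding FP_test_fun_def norm_mult norm_FP_const by simp

lemma set_integrable_FP_test_fun:
  assumes w: "0 \<le> w"
  shows "set_integrable lborel {0<..} (FP_test_fun w)"
proof (rule set_integrable_bound[where f = "\<lambda>t. (2 * (1 + w) / sqrt (2 * pi)) * inverse (1 + (t - w)\<^sup>2)"])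
  show "set_integrable lborel {0<..} (\<lambda>t. (2 * (1 + w) / sqrt (2 * pi)) * inverse (1 + (t - w)\<^sup>2))"
    by (rule set_integrable_mult_right[OF set_integrable_inverse_1_plus_square_shift])
  show "AE t in lborel. t \<in> {0<..} \<longrightarrow>
      norm (FP_test_fun w t) \<le> norm ((2 * (1 + w) / sqrt (2 * pi)) * inverse (1 + (t - w)\<^sup>2))"
    using norm_FP_test_fun_le[OF w] w by (intro AE_I2) (auto simp: abs_mult)
qed (simp add: set_borel_measurable_def)

lemma FP_test_fun_L2p:
  assumes w: "0 \<le> w"
  shows "FP_test_fun w \<in> L2p"
proof -
  define C where "C = 2 * (1 + w) / sqrt (2 * pi)"
  have bound: "(cmod (FP_test_fun w t))\<^sup>2 \<le> C\<^sup>2 * inverse (1 + (t - w)\<^sup>2)" if t: "0 < t" for t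
  proof -
    define q where "q = inverse (1 + (t - w)\<^sup>2)"
    have q: "0 \<le> q" "q \<le> 1" unfolding q_def by (auto simp: inverse_le_1_iff)
    have "(cmod (FP_test_fun w t))\<^sup>2 \<le> (C * q)\<^sup>2"
      using norm_FP_test_fun_le[OF w t] unfolding C_def q_def by (intro power_mono) auto
    also have "\<dots> = C\<^sup>2 * (q * q)" by (simp add: power2_eq_square)
    also have "\<dots> \<le> C\<^sup>2 * q" using q by (intro mult_left_mono mult_left_le) auto
    finally show ?thesis unfolding q_def .
  qed
  have dom: "set_integrable lborel {0<..} (\<lambda>t. C\<^sup>2 * inverse (1 + (t - w)\<^sup>2))"
    by (rule set_integrable_mult_right[OF set_integrable_inverse_1_plus_square_shift])
  have "set_integrable lborel {0<..} (\<lambda>t. (cmod (FP_test_fun w t))\<^sup>2)"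
    by (rule set_integrable_bound[OF dom])
       (use bound in \<open>auto simp: set_borel_measurable_def intro!: AE_I2\<close>)
  then show ?thesis unfolding L2p_def by simp
qed

text \<open>On [w, w + 1] the transform has size w.\<close>

lemma L2norm_FP_test_fun_ge:
  assumes w: "0 < w"
  shows "w\<^sup>2 / (4 * pi) \<le> (L2norm (FP_test_fun w))\<^sup>2"
proof -
  have "(LINT t:{0<..}|lborel. indicator {w..w+1} t * (w\<^sup>2 / (4 * pi)))
      = (\<integral>t. indicator {w..w+1} t * (w\<^sup>2 / (4 * pi)) \<partial>lborel)"
    unfolding set_lebesgue_integral_def using w
    by (intro Bochner_Integration.integral_cong) (auto split: split_indicator)
  then have "w\<^sup>2 / (4 * pi) = (LINT t:{0<..}|lborel. indicator {w..w+1} t * (w\<^sup>2 / (4 * pi)))"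
    by simp
  also have "\<dots> \<le> (LINT t:{0<..}|lborel. (cmod (FP_test_fun w t))\<^sup>2)"
  proof (rule set_integral_mono)
    show "set_integrable lborel {0<..} (\<lambda>t. indicator {w..w+1} t * (w\<^sup>2 / (4 * pi)))"
      unfolding set_integrable_def by (intro integrable_mult_indicator) auto
    show "set_integrable lborel {0<..} (\<lambda>t. (cmod (FP_test_fun w t))\<^sup>2)"
      using FP_test_fun_L2p w unfolding L2p_def by simp
    have "w\<^sup>2 / (4 * pi) \<le> (cmod (FP_test_fun w t))\<^sup>2" if "t \<in> {w..w+1}" for t
      using mult_right_mono[OF norm_test_transform_ge[of w t], of "1 / (2 * pi)"] w that
      unfolding FP_test_fun_def norm_mult power_mult_distrib norm_FP_const_power2 by simp
    then show "indicator {w..w+1} t * (w\<^sup>2 / (4 * pi)) \<le> (cmod (FP_test_fun w t))\<^sup>2" for t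
      by (simp split: split_indicator)
  qed
  also have "\<dots> = (L2norm (FP_test_fun w))\<^sup>2"
    unfolding L2norm_def by (simp add: set_lebesgue_integral_def integral_nonneg_AE)
  finally show ?thesis .
qed

lemma norm_test_prim_div_le:
  assumes s: "0 < s" and u: "0 < u"
  shows "norm (test_prim w u / (of_real (s + u))\<^sup>2) \<le> exp (- 1 * u)"
    and "norm (test_prim w u / (of_real (s + u))\<^sup>2) \<le> (16 / s\<^sup>2) * exp (- (1/2) * u)"
proof -
  have eq: "norm (test_prim w u / (of_real (s + u))\<^sup>2) = u\<^sup>2 * exp (- u) / (s + u)\<^sup>2"
    using s u by (simp del: of_real_add add: norm_divide norm_test_prim norm_power)
  have "u\<^sup>2 * exp (- u) / (s + u)\<^sup>2 \<le> (s + u)\<^sup>2 * exp (- u) / (s + u)\<^sup>2"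
    using s u by (intro divide_right_mono mult_right_mono power_mono) auto
  then show "norm (test_prim w u / (of_real (s + u))\<^sup>2) \<le> exp (- 1 * u)"
    unfolding eq using s u by simp
  have "u\<^sup>2 * exp (- u) / (s + u)\<^sup>2 \<le> (16 * exp (- u / 2)) / s\<^sup>2"
    using s u power2_mult_exp_neg_le[of u] by (intro frac_le power_mono) auto
  then show "norm (test_prim w u / (of_real (s + u))\<^sup>2) \<le> (16 / s\<^sup>2) * exp (- (1/2) * u)"
    unfolding eq by simp
qed

lemma set_integrable_test_prim_div:
  assumes s: "0 < s"
  shows "set_integrable lborel {0<..} (\<lambda>u. test_prim w u / (of_real (s + u))\<^sup>2)"
  by (rule set_integrable_bound[OF set_integrable_exp_neg_Ioi[of 1]])
     (use norm_test_prim_div_le(1)[OF s] in \<open>auto simp: set_borel_measurable_def intro!: AE_I2\<close>)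

lemma set_integrable_test_fun_div:
  assumes s: "0 < s" and w: "0 \<le> w"
  shows "set_integrable lborel {0<..} (\<lambda>u. test_fun w u / of_real (s + u))"
proof (rule set_integrable_bound[where f = "\<lambda>u. of_real (1 / s) * test_fun w u"])
  show "set_integrable lborel {0<..} (\<lambda>u. of_real (1 / s) * test_fun w u)"
    using set_integrable_test_fun[OF w] by (rule set_integrable_mult_right)
  have "norm (test_fun w u / of_real (s + u)) \<le> norm (of_real (1 / s) * test_fun w u)" if u: "0 < u" for u
  proof -
    have "norm (test_fun w u / of_real (s + u)) = norm (test_fun w u) / (s + u)"
      using s u by (simp del: of_real_add add: norm_divide)
    also have "\<dots> \<le> norm (test_fun w u) / s" using s u by (intro divide_left_mono) auto
    finally show ?thesis using s by (simp add: norm_mult norm_divide del: of_real_add)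
  qed
  then show "AE u in lborel. u \<in> {0<..} \<longrightarrow> norm (test_fun w u / of_real (s + u))
      \<le> norm (of_real (1 / s) * test_fun w u)"
    by (intro AE_I2) auto
qed (simp add: set_borel_measurable_def)

lemma has_field_derivative_test_prim_div:
  fixes s w :: real and z :: complex
  defines "a \<equiv> test_rate w"
  assumes nz: "of_real s + z \<noteq> 0"
  shows "((\<lambda>z. z\<^sup>2 * exp (- a * z) / (of_real s + z)) has_field_derivative
      (2 * z - a * z\<^sup>2) * exp (- a * z) / (of_real s + z) - z\<^sup>2 * exp (- a * z) / (of_real s + z)\<^sup>2) (at z)"
proof -
  have "((\<lambda>z. z\<^sup>2 * exp (- a * z) / (of_real s + z)) has_field_derivative
      ((2 * z * exp (- a * z) + z\<^sup>2 * (exp (- a * z) * (- a))) * (of_real s + z) - z\<^sup>2 * exp (- a * z) * 1)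
        / (of_real s + z)\<^sup>2) (at z)"
    using nz by (auto intro!: derivative_eq_intros simp: power2_eq_square algebra_simps)
  also have "((2 * z * E + z\<^sup>2 * (E * (- a))) * d - z\<^sup>2 * E * 1) / d\<^sup>2
      = (2 * z - a * z\<^sup>2) * E / d - z\<^sup>2 * E / d\<^sup>2" if "d \<noteq> 0" for d E :: complex
    using that by (simp add: field_simps power2_eq_square)
  finally show ?thesis using nz by simp
qed

lemma set_integral_test_fun_div:
  assumes s: "0 < s" and w: "0 \<le> w"
  shows "(LINT u:{0<..}|lborel. test_fun w u / of_real (s + u))
       = (LINT u:{0<..}|lborel. test_prim w u / (of_real (s + u))\<^sup>2)"
proof -
  define P where "P u = (of_real u)\<^sup>2 * exp (- test_rate w * of_real u)
      / (of_real s + of_real u)" for u :: real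
  have int1: "set_integrable lborel {0<..} (\<lambda>u. test_fun w u / of_real (s + u))"
    by (rule set_integrable_test_fun_div[OF s w])
  have int2: "set_integrable lborel {0<..} (\<lambda>u. test_prim w u / (of_real (s + u))\<^sup>2)"
    by (rule set_integrable_test_prim_div[OF s])
  have "(LINT u:{0<..}|lborel. test_fun w u / of_real (s + u) - test_prim w u / (of_real (s + u))\<^sup>2) = 0 - 0"
  proof (rule set_integral_Ioi_FTC[where F = P])
    fix x :: real assume x: "0 < x"
    have nz: "of_real s + of_real x \<noteq> (0::complex)"
      using s x by (metis add_pos_pos of_real_add of_real_eq_0_iff order_less_irrefl)
    show "(P has_vector_derivative test_fun w x / of_real (s + x) - test_prim w x / (of_real (s + x))\<^sup>2)
        (at x)"
      using has_vector_derivative_real_field[OF has_field_derivative_test_prim_div[OF nz]]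
      unfolding P_def test_fun_def test_prim_def of_real_add .
    show "isCont (\<lambda>x. test_fun w x / of_real (s + x) - test_prim w x / (of_real (s + x))\<^sup>2) x"
      unfolding test_fun_def test_prim_def of_real_add using nz by (intro continuous_intros) auto
  next
    show "set_integrable lborel {0<..} (\<lambda>x. test_fun w x / of_real (s + x)
        - test_prim w x / (of_real (s + x))\<^sup>2)"
      using int1 int2 by (rule set_integral_diff(1))
    have "(P \<longlongrightarrow> P 0) (at_right 0)"
      unfolding P_def using s by (intro tendsto_intros) auto
    then show "(P \<longlongrightarrow> 0) (at_right 0)" by (simp add: P_def)
    have lim: "((\<lambda>u::real. u\<^sup>2 * exp (- u) / s) \<longlongrightarrow> 0) at_top"
      using s by real_asymp
    have P_bound: "norm (P u) \<le> u\<^sup>2 * exp (- u) / s" if "0 < u" for u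
    proof -
      have "norm (P u) = u\<^sup>2 * exp (- u) / (s + u)"
        unfolding P_def using s that
        by (simp add: norm_divide norm_mult norm_power norm_exp_test_rate flip: of_real_add)
      also have "\<dots> \<le> u\<^sup>2 * exp (- u) / s" using s that by (intro divide_left_mono) auto
      finally show ?thesis .
    qed
    have "\<forall>\<^sub>F u in at_top. norm (P u) \<le> u\<^sup>2 * exp (- u) / s"
      using eventually_gt_at_top[of 0] by (rule eventually_mono) (rule P_bound)
    then show "(P \<longlongrightarrow> 0) at_top"
      using lim by (rule Lim_null_comparison)
  qed
  then show ?thesis using set_integral_diff(2)[OF int1 int2] by simp
qed

lemma norm_set_integral_test_prim_div_le:
  assumes s: "0 < s"
  shows "cmod (LINT u:{0<..}|lborel. test_prim w u / (of_real (s + u))\<^sup>2) \<le> 33 * inverse (1 + s\<^sup>2)"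
proof -
  let ?f = "\<lambda>u. norm (test_prim w u / (of_real (s + u))\<^sup>2)"
  have int: "set_integrable lborel {0<..} ?f"
    by (rule set_integrable_norm[OF set_integrable_test_prim_div[OF s]])
  have "(LINT u:{0<..}|lborel. ?f u) \<le> (LINT u:{0<..}|lborel. exp (- 1 * u))"
    using norm_test_prim_div_le(1)[OF s]
    by (intro set_integral_mono[OF int set_integrable_exp_neg_Ioi]) auto
  also have "\<dots> = 1" using set_integral_exp_neg_Ioi[of 1] by simp
  finally have le1: "(LINT u:{0<..}|lborel. ?f u) \<le> 1" .
  have "(LINT u:{0<..}|lborel. ?f u) \<le> (LINT u:{0<..}|lborel. (16 / s\<^sup>2) * exp (- (1/2) * u))"
    using norm_test_prim_div_le(2)[OF s]
    by (intro set_integral_mono[OF int set_integrable_mult_right[OF set_integrable_exp_neg_Ioi]]) auto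
  also have "\<dots> = 32 / s\<^sup>2" using set_integral_exp_neg_Ioi[of "1/2"] by simp
  finally have le2: "(LINT u:{0<..}|lborel. ?f u) \<le> 32 / s\<^sup>2" .
  have "min 1 (32 / s\<^sup>2) \<le> 33 * inverse (1 + s\<^sup>2)"
  proof (cases "s\<^sup>2 \<le> 32")
    case True
    then have "1 \<le> 33 * inverse (1 + s\<^sup>2)"
      by (simp add: le_divide_eq add_pos_nonneg flip: divide_inverse)
    then show ?thesis by simp
  next
    case False
    then have "32 / s\<^sup>2 \<le> 33 * inverse (1 + s\<^sup>2)" using s by (simp add: field_simps)
    then show ?thesis by simp
  qed
  then show ?thesis
    using set_integral_norm_bound[OF set_integrable_test_prim_div[OF s, of w]] le1 le2 by linarith
qed

lemma norm_Fourier_FP_test_fun_le: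
  assumes w: "0 \<le> w" and s: "0 < s"
  shows "cmod (FP_const * (LINT t:{0<..}|lborel. FP_test_fun w t * exp (\<i> * of_real s * of_real t)))
       \<le> 6 * inverse (1 + s\<^sup>2)"
proof -
  have g: "FP_test_fun w t =
      (LINT u:{0<..}|lborel. FP_const * test_fun w u * exp (\<i> * of_real t * of_real u))" for t
    unfolding FP_test_fun_def set_integral_test_fun_Fourier[OF w, symmetric] mult.assoc
    by (rule set_integral_mult_right[symmetric])
  have "(LINT t:{0<..}|lborel. FP_test_fun w t * exp (\<i> * of_real s * of_real t))
      = \<i> * (LINT u:{0<..}|lborel. FP_const * test_fun w u / of_real (s + u))"
    by (rule Fourier_Ioi_twice[OF _ FP_test_fun_measurable _ set_integrable_FP_test_fun[OF w] g s])
       (measurable, use set_integrable_test_fun[OF w] in simp)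
  also have "\<dots> = \<i> * (FP_const * (LINT u:{0<..}|lborel. test_prim w u / (of_real (s + u))\<^sup>2))"
    by (simp only: set_integral_test_fun_div[OF s w] set_integral_mult_right
        flip: times_divide_eq_right)
  finally have "cmod (FP_const * (LINT t:{0<..}|lborel. FP_test_fun w t * exp (\<i> * of_real s * of_real t)))
      = (cmod FP_const)\<^sup>2 * cmod (LINT u:{0<..}|lborel. test_prim w u / (of_real (s + u))\<^sup>2)"
    by (simp add: norm_mult power2_eq_square)
  also have "\<dots> \<le> (1 / (2 * pi)) * (33 * inverse (1 + s\<^sup>2))"
    unfolding norm_FP_const_power2 by (intro mult_left_mono norm_set_integral_test_prim_div_le[OF s]) auto
  also have "\<dots> = (33 / (2 * pi)) * inverse (1 + s\<^sup>2)" by simp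
  also have "\<dots> \<le> 6 * inverse (1 + s\<^sup>2)"
    using pi_gt3 by (intro mult_right_mono) (auto simp: field_simps)
  finally show ?thesis .
qed

section \<open>The truncated Fourier--Plancherel operator\<close>

lemma trunc_FP_test_fun:
  assumes T: "is_trunc_FP T" and w: "0 \<le> w"
  shows "aeq (T (test_fun w)) (FP_test_fun w)"
proof -
  have "AE t in lborel. 0 < t \<longrightarrow> T (test_fun w) t
      = FP_const * (LINT u:{0<..}|lborel. test_fun w u * exp (\<i> * of_real t * of_real u))"
    using T test_fun_L2p[OF w] set_integrable_test_fun[OF w]
    unfolding is_trunc_FP_def FP_const_def by blast
  then show ?thesis
    unfolding aeq_def
    by (rule eventually_mono) (simp add: set_integral_test_fun_Fourier[OF w] FP_test_fun_def)
qed

lemma trunc_FP_FP_test_fun_le: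
  assumes T: "is_trunc_FP T" and w: "0 \<le> w"
  shows "AE s\<in>{0<..} in lborel. (cmod (T (FP_test_fun w) s))\<^sup>2 \<le> 36 * inverse (1 + s\<^sup>2)"
proof -
  have "AE s in lborel. 0 < s \<longrightarrow> T (FP_test_fun w) s
      = FP_const * (LINT t:{0<..}|lborel. FP_test_fun w t * exp (\<i> * of_real s * of_real t))"
    using T FP_test_fun_L2p[OF w] set_integrable_FP_test_fun[OF w]
    unfolding is_trunc_FP_def FP_const_def by blast
  then show ?thesis
  proof (rule eventually_mono, intro impI)
    fix s :: real
    define q where "q = inverse (1 + s\<^sup>2)"
    have q: "0 \<le> q" "q \<le> 1" unfolding q_def by (auto simp: inverse_le_1_iff)
    assume "0 < s \<longrightarrow> T (FP_test_fun w) s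
        = FP_const * (LINT t:{0<..}|lborel. FP_test_fun w t * exp (\<i> * of_real s * of_real t))"
      and "s \<in> {0<..}"
    then have "cmod (T (FP_test_fun w) s) \<le> 6 * q"
      using norm_Fourier_FP_test_fun_le[OF w] unfolding q_def by simp
    then have "(cmod (T (FP_test_fun w) s))\<^sup>2 \<le> 36 * (q * q)"
      using power_mono[of _ "6 * q" 2] by (simp add: power2_eq_square)
    also have "\<dots> \<le> 36 * q" using q by (intro mult_left_mono mult_left_le) auto
    finally show "(cmod (T (FP_test_fun w) s))\<^sup>2 \<le> 36 * inverse (1 + s\<^sup>2)" unfolding q_def .
  qed
qed

lemma L2norm_trunc_FP_twice_test_fun_le:
  assumes T: "is_trunc_FP T" and w: "0 \<le> w"
  shows "L2norm (T (T (test_fun w))) \<le> 6 * sqrt (LINT s:{0<..}|lborel. inverse (1 + s\<^sup>2))"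
proof -
  have TL: "\<forall>f\<in>L2p. T f \<in> L2p" and T_aeq: "\<forall>f\<in>L2p. \<forall>g\<in>L2p. aeq f g \<longrightarrow> aeq (T f) (T g)"
    using T unfolding is_trunc_FP_def bdd_op_L2_def by blast+
  have "T (test_fun w) \<in> L2p" "FP_test_fun w \<in> L2p"
    using TL test_fun_L2p[OF w] FP_test_fun_L2p[OF w] by auto
  then have eq: "L2norm (T (T (test_fun w))) = L2norm (T (FP_test_fun w))"
    using L2norm_aeq TL T_aeq trunc_FP_test_fun[OF T w] by blast
  have "set_integrable lborel {0<..} (\<lambda>s. (cmod (T (FP_test_fun w) s))\<^sup>2)"
    using TL \<open>FP_test_fun w \<in> L2p\<close> unfolding L2p_def by blast
  then have "(LINT s:{0<..}|lborel. (cmod (T (FP_test_fun w) s))\<^sup>2)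
      \<le> (LINT s:{0<..}|lborel. 36 * inverse (1 + s\<^sup>2))"
    using set_integrable_inverse_1_plus_square_shift[of 0]
    by (intro set_integral_mono_AE trunc_FP_FP_test_fun_le[OF T w]) auto
  then have "L2norm (T (FP_test_fun w))
      \<le> sqrt (6\<^sup>2 * (LINT s:{0<..}|lborel. inverse (1 + s\<^sup>2)))"
    unfolding L2norm_def by (intro real_sqrt_le_mono) simp
  then show ?thesis unfolding eq real_sqrt_mult by simp
qed

lemma trunc_FP_not_quadratic_norm_bound:
  assumes T: "is_trunc_FP T"
  shows "\<not> quadratic_norm_bound T"
proof
  assume "quadratic_norm_bound T"
  then obtain K where K: "\<forall>f\<in>L2p. (L2norm (T f))\<^sup>2 \<le> K * L2norm (T (T f)) * L2norm f"
    unfolding quadratic_norm_bound_def by blast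
  define B where "B = 6 * sqrt (LINT s:{0<..}|lborel. inverse (1 + s\<^sup>2))"
  define w where "w = 160 * pi * \<bar>K\<bar> * B + 1"
  have B: "0 \<le> B"
    unfolding B_def set_lebesgue_integral_def by (simp add: integral_nonneg_AE)
  then have w: "1 \<le> w" unfolding w_def by simp
  have Tx: "T (test_fun w) \<in> L2p"
    using T test_fun_L2p w unfolding is_trunc_FP_def bdd_op_L2_def by auto
  have "w\<^sup>2 / (4 * pi) \<le> (L2norm (T (test_fun w)))\<^sup>2"
    using L2norm_FP_test_fun_ge[of w] L2norm_aeq[OF Tx FP_test_fun_L2p trunc_FP_test_fun[OF T]] w
    by simp
  also have "\<dots> \<le> K * L2norm (T (T (test_fun w))) * L2norm (test_fun w)"
    using K test_fun_L2p[of w] w by simp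
  also have "\<dots> \<le> \<bar>K\<bar> * L2norm (T (T (test_fun w))) * L2norm (test_fun w)"
    using L2norm_nonneg by (intro mult_right_mono) auto
  also have "\<dots> \<le> \<bar>K\<bar> * B * (20 * (1 + w))"
  proof -
    have "L2norm (T (T (test_fun w))) \<le> B"
      unfolding B_def using L2norm_trunc_FP_twice_test_fun_le[OF T] w by simp
    then show ?thesis
      using L2norm_test_fun_le[of w] w L2norm_nonneg B by (intro mult_mono mult_left_mono) auto
  qed
  also have "\<dots> \<le> \<bar>K\<bar> * B * (40 * w)" using w B by (intro mult_left_mono) auto
  finally have "w * w \<le> (160 * pi * \<bar>K\<bar> * B) * w"
    using pi_gt3 by (simp add: field_simps power2_eq_square)
  then show False using w unfolding w_def by simp
qed

theorem corollary4p9: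
  fixes T :: "(real \<Rightarrow> complex) \<Rightarrow> (real \<Rightarrow> complex)"
    and H :: "'h cH"
  assumes "is_trunc_FP T"
    and "complex_hilbert_space H"
  shows "\<not> (\<exists>S Sinv N.
             bdd_op_L2_H H S \<and> bdd_op_H_L2 H Sinv \<and>
             (\<forall>x. S (Sinv x) = x) \<and> (\<forall>f\<in>L2p. aeq (Sinv (S f)) f) \<and>
             normal_op H N \<and>
             (\<forall>f\<in>L2p. aeq (T f) (Sinv (N (S f)))))"
  using similar_to_normal_imp_quadratic_norm_bound[OF assms(2)]
    trunc_FP_not_quadratic_norm_bound[OF assms(1)] assms(1)
  unfolding is_trunc_FP_def by blast

end
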